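(* Let $G$ be a connected Lie group. The map $f:H^*(G)\to T(H^*(BG)[1])$ defined by $f(U_{i_1}\cdots U_{i_j})=P_{i_1}\sqcup\!\sqcup\cdots\sqcup\!\sqcup P_{i_j}$ (in particular $f(U_i)=P_i$ and $f(U_{i_1}U_{i_2})=P_{i_1}\otimes P_{i_2}+P_{i_2}\otimes P_{i_1}$) is a map of differential graded coalgebras, and therefore a map of differential graded Hopf algebras.
   Context: Rational coefficients. $H^*(BG)$ is a polynomial algebra on even-degree generators $P_i$, and $H^*(G)$ is the exterior algebra on odd-degree primitive generators $U_i$ with $|U_i|=|P_i|-1$, with zero differential and coproduct induced by the group multiplication (an algebra map with $U_i$ primitive). $T(H^*(BG)[1])$ has the deconcatenation coproduct $\Delta(P_{i_1}\otimes\cdots\otimes P_{i_k})=\sum_jP_{i_1}\otimes\cdots\otimes P_{i_j}\bigotimes P_{i_{j+1}}\otimes\cdots\otimes P_{i_k}$, the shuffle product $\sqcup\!\sqcup$, and the bar differential $\delta$ induced by the product of $H^*(BG)$ (a derivation for the shuffle product, vanishing on each $P_i$). *)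

theory Defs
  imports Complex_Main "HOL-Library.Poly_Mapping" "HOL-Library.Multiset"
begin

text \<open>Rational vector spaces with a distinguished basis are modelled as finitely
supported functions from the basis to the rationals.

 H^*(BG) = Q[P_0,...,P_(n-1)], deg P_i = d i (even, positive).  A monomial is a
 multiset of generator indices; monomial product = multiset sum.

 T(H^*(BG)[1]) (reduced: tensor words of monomials of positive degree):
 basis = lists of nonempty monomials; the shifted degree of a monomial m is deg m - 1.

 H^*(G) = exterior algebra on U_0,...,U_(n-1), deg U_i = d i - 1 (odd):
 basis = finite sets S of indices, S standing for U_(i1) ... U_(ik) with i1 < ... < ik.\<close>

type_synonym mono = "nat multiset"
type_synonym word = "mono list"

definition cmul :: "rat \<Rightarrow> ('a \<Rightarrow>\<^sub>0 rat) \<Rightarrow> ('a \<Rightarrow>\<^sub>0 rat)" where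
  "cmul c p = Poly_Mapping.map (\<lambda>x. c * x) p"

definition lin :: "('a \<Rightarrow> ('b \<Rightarrow>\<^sub>0 rat)) \<Rightarrow> ('a \<Rightarrow>\<^sub>0 rat) \<Rightarrow> ('b \<Rightarrow>\<^sub>0 rat)" where
  "lin g p = (\<Sum>k\<in>Poly_Mapping.keys p. cmul (Poly_Mapping.lookup p k) (g k))"

definition lin2 :: "('a \<Rightarrow> 'b \<Rightarrow> ('c \<Rightarrow>\<^sub>0 rat)) \<Rightarrow> ('a \<Rightarrow>\<^sub>0 rat) \<Rightarrow> ('b \<Rightarrow>\<^sub>0 rat) \<Rightarrow> ('c \<Rightarrow>\<^sub>0 rat)" where
  "lin2 g p q = (\<Sum>a\<in>Poly_Mapping.keys p. \<Sum>b\<in>Poly_Mapping.keys q.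
      cmul (Poly_Mapping.lookup p a * Poly_Mapping.lookup q b) (g a b))"

definition tens :: "('a \<Rightarrow>\<^sub>0 rat) \<Rightarrow> ('b \<Rightarrow>\<^sub>0 rat) \<Rightarrow> (('a \<times> 'b) \<Rightarrow>\<^sub>0 rat)" where
  "tens p q = lin2 (\<lambda>a b. Poly_Mapping.single (a, b) 1) p q"

definition ks :: "nat \<Rightarrow> nat \<Rightarrow> rat" where
  "ks a b = (if even (a * b) then 1 else -1)"

definition mdeg :: "(nat \<Rightarrow> nat) \<Rightarrow> mono \<Rightarrow> nat" where
  "mdeg d m = (\<Sum>i\<in>#m. d i)"

definition sdeg :: "(nat \<Rightarrow> nat) \<Rightarrow> mono \<Rightarrow> nat" where
  "sdeg d m = mdeg d m - 1"

definition wdeg :: "(nat \<Rightarrow> nat) \<Rightarrow> word \<Rightarrow> nat" where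
  "wdeg d w = sum_list (map (sdeg d) w)"

definition edeg :: "(nat \<Rightarrow> nat) \<Rightarrow> nat set \<Rightarrow> nat" where
  "edeg d S = (\<Sum>i\<in>S. d i - 1)"

definition prepend :: "mono \<Rightarrow> (word \<Rightarrow>\<^sub>0 rat) \<Rightarrow> (word \<Rightarrow>\<^sub>0 rat)" where
  "prepend x p = lin (\<lambda>w. Poly_Mapping.single (x # w) 1) p"

fun shw :: "(nat \<Rightarrow> nat) \<Rightarrow> word \<Rightarrow> word \<Rightarrow> (word \<Rightarrow>\<^sub>0 rat)" where
  "shw d [] ys = Poly_Mapping.single ys 1"
| "shw d (x # xs) [] = Poly_Mapping.single (x # xs) 1"
| "shw d (x # xs) (y # ys) =
     prepend x (shw d xs (y # ys))
     + cmul (ks (sdeg d y) (sdeg d x + wdeg d xs)) (prepend y (shw d (x # xs) ys))"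

definition shuffle :: "(nat \<Rightarrow> nat) \<Rightarrow> (word \<Rightarrow>\<^sub>0 rat) \<Rightarrow> (word \<Rightarrow>\<^sub>0 rat) \<Rightarrow> (word \<Rightarrow>\<^sub>0 rat)" where
  "shuffle d p q = lin2 (shw d) p q"

definition deconc :: "(word \<Rightarrow>\<^sub>0 rat) \<Rightarrow> ((word \<times> word) \<Rightarrow>\<^sub>0 rat)" where
  "deconc p = lin (\<lambda>w. \<Sum>j\<in>{0..length w}. Poly_Mapping.single (take j w, drop j w) 1) p"

definition epsT :: "(word \<Rightarrow>\<^sub>0 rat) \<Rightarrow> rat" where
  "epsT p = Poly_Mapping.lookup p []"

definition barw :: "(nat \<Rightarrow> nat) \<Rightarrow> word \<Rightarrow> (word \<Rightarrow>\<^sub>0 rat)" where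
  "barw d w = (\<Sum>j<length w - 1.
      cmul (if even (wdeg d (take (Suc j) w)) then 1 else -1)
        (Poly_Mapping.single (take j w @ [w ! j + w ! Suc j] @ drop (Suc (Suc j)) w) 1))"

definition bar :: "(nat \<Rightarrow> nat) \<Rightarrow> (word \<Rightarrow>\<^sub>0 rat) \<Rightarrow> (word \<Rightarrow>\<^sub>0 rat)" where
  "bar d p = lin (barw d) p"

text \<open>product of basis monomials U_A U_B (all generators odd)\<close>
definition wedgeb :: "nat set \<Rightarrow> nat set \<Rightarrow> (nat set \<Rightarrow>\<^sub>0 rat)" where
  "wedgeb A B = (if A \<inter> B \<noteq> {} then 0 else
     Poly_Mapping.single (A \<union> B)
       (if even (card {(a, b). a \<in> A \<and> b \<in> B \<and> b < a}) then 1 else -1))"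

definition wedge :: "(nat set \<Rightarrow>\<^sub>0 rat) \<Rightarrow> (nat set \<Rightarrow>\<^sub>0 rat) \<Rightarrow> (nat set \<Rightarrow>\<^sub>0 rat)" where
  "wedge p q = lin2 wedgeb p q"

definition tmul :: "(nat \<Rightarrow> nat) \<Rightarrow> ((nat set \<times> nat set) \<Rightarrow>\<^sub>0 rat) \<Rightarrow> ((nat set \<times> nat set) \<Rightarrow>\<^sub>0 rat)
                     \<Rightarrow> ((nat set \<times> nat set) \<Rightarrow>\<^sub>0 rat)" where
  "tmul d p q = lin2 (\<lambda>(A, B) (C, E). cmul (ks (edeg d B) (edeg d C)) (tens (wedgeb A C) (wedgeb B E))) p q"

text \<open>coproduct: the algebra map with U_i primitive, i.e.
  Delta(U_(i1) ... U_(ik)) = prod_j (U_(ij) (x) 1 + 1 (x) U_(ij))\<close>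
definition coHb :: "(nat \<Rightarrow> nat) \<Rightarrow> nat set \<Rightarrow> ((nat set \<times> nat set) \<Rightarrow>\<^sub>0 rat)" where
  "coHb d S = foldr (\<lambda>i acc. tmul d (Poly_Mapping.single ({i}, {}) 1 + Poly_Mapping.single ({}, {i}) 1) acc)
                (sorted_list_of_set S) (Poly_Mapping.single ({}, {}) 1)"

definition coH :: "(nat \<Rightarrow> nat) \<Rightarrow> (nat set \<Rightarrow>\<^sub>0 rat) \<Rightarrow> ((nat set \<times> nat set) \<Rightarrow>\<^sub>0 rat)" where
  "coH d p = lin (coHb d) p"

definition epsH :: "(nat set \<Rightarrow>\<^sub>0 rat) \<Rightarrow> rat" where
  "epsH p = Poly_Mapping.lookup p {}"

definition dH :: "(nat set \<Rightarrow>\<^sub>0 rat) \<Rightarrow> (nat set \<Rightarrow>\<^sub>0 rat)" where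
  "dH p = 0"

definition fb :: "(nat \<Rightarrow> nat) \<Rightarrow> nat set \<Rightarrow> (word \<Rightarrow>\<^sub>0 rat)" where
  "fb d S = foldr (\<lambda>i acc. shuffle d (Poly_Mapping.single [{#i#}] 1) acc)
              (sorted_list_of_set S) (Poly_Mapping.single [] 1)"

definition fmap :: "(nat \<Rightarrow> nat) \<Rightarrow> (nat set \<Rightarrow>\<^sub>0 rat) \<Rightarrow> (word \<Rightarrow>\<^sub>0 rat)" where
  "fmap d p = lin (fb d) p"

definition ftens :: "(nat \<Rightarrow> nat) \<Rightarrow> ((nat set \<times> nat set) \<Rightarrow>\<^sub>0 rat) \<Rightarrow> ((word \<times> word) \<Rightarrow>\<^sub>0 rat)" where
  "ftens d p = lin (\<lambda>(A, B). tens (fb d A) (fb d B)) p"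

end

theory Submission
  imports Defs "HOL-Combinatorics.Multiset_Permutations" "HOL-Library.Disjoint_Sets"
begin

text \<open>Every generator P_i has odd degree in H^*(BG)[1], so the iterated shuffle of single letters is an
  antisymmetrisation: f(U_S) is the sum of the words [P_w1|...|P_wk] over all orderings w of S, with
  sign (-1)^(number of inversions of w). The compatibilities then reduce to bijections and
  sign-reversing involutions on orderings. Cutting an ordering of S into a prefix and a suffix is the
  same as choosing A \<subseteq> S together with orderings of A and S - A; the sign splits off the
  inversions between A and S - A, which is the sign in U_A U_(S-A) = \<plusminus>U_S. The bar differential
  multiplies two adjacent letters; exchanging them reverses the sign of the ordering but not the
  commutative product, so the terms cancel in pairs. Interleaving orderings of disjoint sets A and B
  yields each ordering of A \<union> B once, again with the sign of U_A U_B, and if A and B meet, the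
  shuffle vanishes just as U_A U_B does.\<close>

section \<open>Linear extensions\<close>

lemma lookup_cmul [simp]: "Poly_Mapping.lookup (cmul c p) k = c * Poly_Mapping.lookup p k"
  by (simp add: cmul_def Poly_Mapping.map.rep_eq when_def)

lemma cmul_add_scalar: "cmul (a + b) p = cmul a p + cmul b p"
  by (rule poly_mapping_eqI) (simp add: lookup_add algebra_simps)

lemma cmul_cmul [simp]: "cmul a (cmul b p) = cmul (a * b) p"
  by (rule poly_mapping_eqI) simp

lemma cmul_one [simp]: "cmul 1 p = p"
  by (rule poly_mapping_eqI) simp

lemma cmul_zero_scalar [simp]: "cmul 0 p = 0"
  by (rule poly_mapping_eqI) simp

lemma cmul_zero [simp]: "cmul c 0 = 0"
  by (rule poly_mapping_eqI) simp

lemma cmul_single [simp]: "cmul c (Poly_Mapping.single k a) = Poly_Mapping.single k (c * a)"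
  by (rule poly_mapping_eqI) (simp add: lookup_single when_def)

lemma cmul_sum: "cmul c (sum f A) = (\<Sum>a\<in>A. cmul c (f a))"
  by (rule poly_mapping_eqI) (simp add: lookup_sum sum_distrib_left)

lemma lin_superset:
  "finite K \<Longrightarrow> Poly_Mapping.keys p \<subseteq> K \<Longrightarrow> lin g p = (\<Sum>k\<in>K. cmul (Poly_Mapping.lookup p k) (g k))"
  unfolding lin_def by (rule sum.mono_neutral_left) (auto simp: in_keys_iff)

lemma lin_add: "lin g (p + q) = lin g p + lin g q"
proof -
  let ?K = "Poly_Mapping.keys p \<union> Poly_Mapping.keys q"
  have "lin g (p + q) = (\<Sum>k\<in>?K. cmul (Poly_Mapping.lookup (p + q) k) (g k))"
    by (rule lin_superset) (auto simp: keys_add)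
  also have "\<dots> = (\<Sum>k\<in>?K. cmul (Poly_Mapping.lookup p k) (g k)) + (\<Sum>k\<in>?K. cmul (Poly_Mapping.lookup q k) (g k))"
    by (simp add: lookup_add cmul_add_scalar sum.distrib)
  also have "\<dots> = lin g p + lin g q"
    by (subst (1 2) lin_superset[symmetric]) auto
  finally show ?thesis .
qed

lemma lin_zero [simp]: "lin g 0 = 0"
  by (simp add: lin_def)

lemma lin_cmul: "lin g (cmul c p) = cmul c (lin g p)"
proof -
  have "lin g (cmul c p) = (\<Sum>k\<in>Poly_Mapping.keys p. cmul (Poly_Mapping.lookup (cmul c p) k) (g k))"
    by (rule lin_superset) (auto simp: in_keys_iff)
  then show ?thesis by (simp add: lin_def cmul_sum)
qed

lemma lin_single [simp]: "lin g (Poly_Mapping.single k c) = cmul c (g k)"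
  by (cases "c = 0") (auto simp: lin_def)

lemma lin_sum: "lin g (sum f A) = (\<Sum>a\<in>A. lin g (f a))"
  by (induction A rule: infinite_finite_induct) (auto simp: lin_add)

lemma lin_cong: "(\<And>k. k \<in> Poly_Mapping.keys p \<Longrightarrow> g k = g' k) \<Longrightarrow> lin g p = lin g' p"
  by (simp add: lin_def)

lemma lin_lin: "lin h (lin g p) = lin (\<lambda>k. lin h (g k)) p"
  by (simp only: lin_def[of g p] lin_def[of "\<lambda>k. lin h (g k)" p] lin_sum lin_cmul)

lemma lin_eq_zero: "(\<And>k. k \<in> Poly_Mapping.keys p \<Longrightarrow> g k = 0) \<Longrightarrow> lin g p = 0"
  by (simp add: lin_def)

lemma lookup_lin:
  "Poly_Mapping.lookup (lin g p) k = (\<Sum>a\<in>Poly_Mapping.keys p. Poly_Mapping.lookup p a * Poly_Mapping.lookup (g a) k)"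
  by (simp add: lin_def lookup_sum)

lemma lin2_eq_lin_left: "lin2 g p q = lin (\<lambda>a. lin (g a) q) p"
  by (simp add: lin2_def lin_def cmul_sum mult.commute)

lemma lin2_eq_lin_right: "lin2 g p q = lin (\<lambda>b. lin (\<lambda>a. g a b) p) q"
  unfolding lin2_def lin_def cmul_sum by (subst sum.swap) (simp add: mult.commute)

lemma lin_swap: "lin (\<lambda>a. lin (g a) q) p = lin (\<lambda>b. lin (\<lambda>a. g a b) p) q"
  using lin2_eq_lin_left[of g p q] lin2_eq_lin_right[of g p q] by simp

lemma lin2_lin: "lin2 g (lin h p) (lin k q) = lin (\<lambda>a. lin (\<lambda>b. lin2 g (h a) (k b)) q) p"
proof -
  have "lin2 g (lin h p) (lin k q) = lin (\<lambda>a. lin (\<lambda>c. lin (\<lambda>b. lin (g c) (k b)) q) (h a)) p"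
    by (simp only: lin2_eq_lin_left lin_lin)
  also have "\<dots> = lin (\<lambda>a. lin (\<lambda>b. lin2 g (h a) (k b)) q) p"
    by (subst lin_swap) (simp only: lin2_eq_lin_left)
  finally show ?thesis .
qed

section \<open>Inversions\<close>

fun inversions :: "nat list \<Rightarrow> nat" where
  "inversions [] = 0"
| "inversions (x # xs) = length (filter (\<lambda>y. y < x) xs) + inversions xs"

definition cross_inversions :: "nat list \<Rightarrow> nat list \<Rightarrow> nat" where
  "cross_inversions u v = (\<Sum>a\<leftarrow>u. length (filter (\<lambda>b. b < a) v))"

definition set_inversions :: "nat set \<Rightarrow> nat set \<Rightarrow> nat" where
  "set_inversions A B = card {(a, b). a \<in> A \<and> b \<in> B \<and> b < a}"

lemma cross_inversions_Nil [simp]: "cross_inversions [] v = 0"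
  by (simp add: cross_inversions_def)

lemma cross_inversions_Cons [simp]:
  "cross_inversions (x # u) v = length (filter (\<lambda>b. b < x) v) + cross_inversions u v"
  by (simp add: cross_inversions_def)

lemma cross_inversions_Cons_right:
  "cross_inversions u (y # v) = cross_inversions u v + length (filter (\<lambda>a. y < a) u)"
  by (induction u) auto

lemma inversions_append: "inversions (u @ v) = inversions u + inversions v + cross_inversions u v"
  by (induction u) auto

lemma cross_inversions_distinct:
  assumes "distinct u" "distinct v"
  shows "cross_inversions u v = set_inversions (set u) (set v)"
proof -
  have "cross_inversions u v = (\<Sum>a\<in>set u. length (filter (\<lambda>b. b < a) v))"
    unfolding cross_inversions_def using assms(1) by (rule sum_list_distinct_conv_sum_set)
  also have "\<dots> = (\<Sum>a\<in>set u. card {b\<in>set v. b < a})"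
    using assms(2) by (intro sum.cong) (auto simp: distinct_length_filter Int_def conj_commute)
  also have "\<dots> = card (SIGMA a:set u. {b\<in>set v. b < a})"
    by simp
  also have "(SIGMA a:set u. {b\<in>set v. b < a}) = {(a, b). a \<in> set u \<and> b \<in> set v \<and> b < a}"
    by auto
  finally show ?thesis by (simp add: set_inversions_def)
qed

lemma set_inversions_insert_min_left:
  "\<forall>b\<in>B. i < b \<Longrightarrow> set_inversions (insert i A) B = set_inversions A B"
  unfolding set_inversions_def by (rule arg_cong[where f = card]) auto

lemma set_inversions_insert_min_right:
  assumes "finite A" "finite B" "i \<notin> B" "\<forall>a\<in>A. i < a"
  shows "set_inversions A (insert i B) = set_inversions A B + card A"
proof -
  let ?I = "{(a, b). a \<in> A \<and> b \<in> B \<and> b < a}"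
  have "{(a, b). a \<in> A \<and> b \<in> insert i B \<and> b < a} = ?I \<union> A \<times> {i}"
    using assms(4) by auto
  moreover have "finite ?I"
    by (rule finite_subset[of _ "A \<times> B"]) (use assms in auto)
  then have "card (?I \<union> A \<times> {i}) = card ?I + card (A \<times> {i})"
    by (intro card_Un_disjoint) (use assms in auto)
  ultimately show ?thesis
    unfolding set_inversions_def by (simp add: card_cartesian_product)
qed

lemma inversions_map_mono:
  "\<forall>a\<in>set u. \<forall>b\<in>set u. f a < f b \<longleftrightarrow> a < b \<Longrightarrow> inversions (map f u) = inversions u"
proof (induction u)
  case (Cons x u)
  have "length (filter (\<lambda>y. y < f x) (map f u)) = length (filter (\<lambda>y. f y < f x) u)"
    by (simp add: filter_map comp_def)
  also have "\<dots> = length (filter (\<lambda>y. y < x) u)"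
    using Cons.prems by (intro arg_cong[where f = length] filter_cong) auto
  finally show ?case using Cons by simp
qed simp

lemma inversions_swap_adjacent:
  assumes "a \<noteq> b"
  shows "odd (inversions (p @ a # b # r) + inversions (p @ b # a # r))"
proof -
  have "cross_inversions p (a # b # r) = cross_inversions p (b # a # r)"
    by (simp add: cross_inversions_Cons_right)
  moreover have "(if b < a then 1 else 0) + (if a < b then 1 else (0::nat)) = 1"
    using assms by auto
  ultimately have "inversions (p @ a # b # r) + inversions (p @ b # a # r) = 1 + 2 * (inversions p
      + cross_inversions p (a # b # r) + length (filter (\<lambda>y. y < a) r) + length (filter (\<lambda>y. y < b) r)
      + inversions r)"
    using assms by (simp only: inversions_append) simp
  then show ?thesis by presburger
qed

lemma inversions_transpose_absent:
  "x \<notin> set w \<or> Suc x \<notin> set w \<Longrightarrow> inversions (map (transpose x (Suc x)) w) = inversions w"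
  by (rule inversions_map_mono) (auto simp: transpose_def)

lemma length_filter_transpose_less_Suc:
  "Suc x \<in> set w \<Longrightarrow> x \<notin> set w \<Longrightarrow> distinct w \<Longrightarrow>
   length (filter (\<lambda>z. transpose x (Suc x) z < Suc x) w) = Suc (length (filter (\<lambda>z. z < x) w))"
proof (induction w)
  case (Cons c w)
  show ?case
  proof (cases "c = Suc x")
    case True
    with Cons.prems have "filter (\<lambda>z. transpose x (Suc x) z < Suc x) w = filter (\<lambda>z. z < x) w"
      by (intro filter_cong) (auto simp: transpose_def)
    with True show ?thesis by simp
  next
    case False
    with Cons show ?thesis by (auto simp: transpose_def)
  qed
qed simp

lemma length_filter_less_Suc_transpose:
  "x \<in> set w \<Longrightarrow> Suc x \<notin> set w \<Longrightarrow> distinct w \<Longrightarrow>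
   length (filter (\<lambda>z. z < Suc x) w) = Suc (length (filter (\<lambda>z. transpose x (Suc x) z < x) w))"
proof (induction w)
  case (Cons c w)
  show ?case
  proof (cases "c = x")
    case True
    with Cons.prems have "filter (\<lambda>z. transpose x (Suc x) z < x) w = filter (\<lambda>z. z < Suc x) w"
      by (intro filter_cong) (auto simp: transpose_def)
    with True show ?thesis by simp
  next
    case False
    with Cons show ?thesis by (auto simp: transpose_def)
  qed
qed simp

lemma inversions_transpose_Suc:
  "distinct w \<Longrightarrow> x \<in> set w \<Longrightarrow> Suc x \<in> set w \<Longrightarrow>
   odd (inversions (map (transpose x (Suc x)) w) + inversions w)"
proof (induction w)
  case (Cons a w)
  consider "a = x" | "a = Suc x" | "a \<noteq> x" "a \<noteq> Suc x"
    by blast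
  then show ?case
  proof cases
    case 1
    with Cons.prems have "x \<notin> set w" "Suc x \<in> set w" "distinct w"
      by auto
    with 1 show ?thesis
      using length_filter_transpose_less_Suc[of x w] inversions_transpose_absent[of x w]
      by (simp add: filter_map comp_def)
  next
    case 2
    with Cons.prems have "x \<in> set w" "Suc x \<notin> set w" "distinct w"
      by auto
    with 2 show ?thesis
      using length_filter_less_Suc_transpose[of x w] inversions_transpose_absent[of x w]
      by (simp add: filter_map comp_def)
  next
    case 3
    then have "filter (\<lambda>z. transpose x (Suc x) z < a) w = filter (\<lambda>z. z < a) w"
      by (intro filter_cong) (auto simp: transpose_def)
    with 3 Cons show ?thesis
      by (simp add: filter_map comp_def)
  qed
qed simp

section \<open>Interleavings\<close>

fun interleave :: "bool list \<Rightarrow> 'a list \<Rightarrow> 'a list \<Rightarrow> 'a list" where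
  "interleave [] xs ys = []"
| "interleave (True # m) (x # xs) ys = x # interleave m xs ys"
| "interleave (True # m) [] ys = []"
| "interleave (False # m) xs (y # ys) = y # interleave m xs ys"
| "interleave (False # m) xs [] = []"

definition shuffle_masks :: "nat \<Rightarrow> nat \<Rightarrow> bool list set" where
  "shuffle_masks a b = {m. length m = a + b \<and> length (filter id m) = a}"

text \<open>The number of pairs in which a letter of the right word is placed before one of the left word.\<close>
fun crossings :: "bool list \<Rightarrow> nat" where
  "crossings [] = 0"
| "crossings (True # m) = crossings m"
| "crossings (False # m) = length (filter id m) + crossings m"

definition fits_mask :: "bool list \<Rightarrow> 'a list \<Rightarrow> 'b list \<Rightarrow> bool" where
  "fits_mask m u v \<longleftrightarrow> m \<in> shuffle_masks (length u) (length v)"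

lemma fits_mask_simps [simp]:
  "fits_mask [] u v \<longleftrightarrow> u = [] \<and> v = []"
  "fits_mask (True # m) (x # u) v \<longleftrightarrow> fits_mask m u v"
  "fits_mask (True # m) [] v \<longleftrightarrow> False"
  "fits_mask (False # m) u (y # v) \<longleftrightarrow> fits_mask m u v"
  "fits_mask (False # m) u [] \<longleftrightarrow> False"
  by (auto simp: fits_mask_def shuffle_masks_def) (metis Suc_n_not_le_n length_filter_le)

lemma finite_shuffle_masks [simp]: "finite (shuffle_masks a b)"
proof -
  have "shuffle_masks a b \<subseteq> {m. set m \<subseteq> UNIV \<and> length m = a + b}"
    by (auto simp: shuffle_masks_def)
  moreover have "finite {m :: bool list. set m \<subseteq> UNIV \<and> length m = a + b}"
    by (rule finite_lists_length_eq) simp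
  ultimately show ?thesis by (rule finite_subset)
qed

lemma shuffle_masks_0_left: "shuffle_masks 0 b = {replicate b False}"
proof -
  have "m = replicate (length m) False" if "length (filter id m) = 0" for m :: "bool list"
    using that by (induction m) (auto split: if_splits)
  then show ?thesis by (auto simp: shuffle_masks_def filter_empty_conv)
qed

lemma shuffle_masks_0_right: "shuffle_masks a 0 = {replicate a True}"
proof -
  have "m = replicate (length m) True" if "length (filter id m) = length m" for m :: "bool list"
    using that
  proof (induction m)
    case (Cons c m)
    then show ?case using length_filter_le[of "\<lambda>a. a" m] by (cases c) auto
  qed simp
  then show ?thesis by (auto simp: shuffle_masks_def)
qed

lemma shuffle_masks_Suc_Suc:
  "shuffle_masks (Suc a) (Suc b) = Cons True ` shuffle_masks a (Suc b) \<union> Cons False ` shuffle_masks (Suc a) b"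
proof (intro equalityI subsetI)
  fix m assume "m \<in> shuffle_masks (Suc a) (Suc b)"
  moreover from this obtain c m' where "m = c # m'"
    by (cases m) (auto simp: shuffle_masks_def)
  ultimately show "m \<in> Cons True ` shuffle_masks a (Suc b) \<union> Cons False ` shuffle_masks (Suc a) b"
    by (cases c) (auto simp: shuffle_masks_def)
qed (auto simp: shuffle_masks_def)

lemma sum_shuffle_masks_Suc_Suc:
  "(\<Sum>m\<in>shuffle_masks (Suc a) (Suc b). f m) =
   (\<Sum>m\<in>shuffle_masks a (Suc b). f (True # m)) + (\<Sum>m\<in>shuffle_masks (Suc a) b. f (False # m))"
  unfolding shuffle_masks_Suc_Suc
  by (subst sum.union_disjoint) (auto simp: sum.reindex)

lemma crossings_replicate [simp]: "crossings (replicate k c) = 0"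
  by (induction k) (cases c; simp)+

lemma interleave_replicate_False [simp]: "interleave (replicate (length y) False) [] y = y"
  by (induction y) auto

lemma interleave_replicate_True [simp]: "interleave (replicate (length x) True) x [] = x"
  by (induction x) auto

lemma map_interleave: "map f (interleave m u v) = interleave m (map f u) (map f v)"
  by (induction m u v rule: interleave.induct) auto

lemma mset_interleave: "fits_mask m u v \<Longrightarrow> mset (interleave m u v) = mset u + mset v"
  by (induction m u v rule: interleave.induct) auto

lemma filter_interleave_left:
  "fits_mask m u v \<Longrightarrow> \<forall>x\<in>set u. P x \<Longrightarrow> \<forall>y\<in>set v. \<not> P y \<Longrightarrow> filter P (interleave m u v) = u"
  by (induction m u v rule: interleave.induct) auto

lemma filter_interleave_right:
  "fits_mask m u v \<Longrightarrow> \<forall>x\<in>set u. P x \<Longrightarrow> \<forall>y\<in>set v. \<not> P y \<Longrightarrow>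
   filter (\<lambda>x. \<not> P x) (interleave m u v) = v"
  by (induction m u v rule: interleave.induct) auto

lemma map_interleave_mask:
  "fits_mask m u v \<Longrightarrow> \<forall>x\<in>set u. P x \<Longrightarrow> \<forall>y\<in>set v. \<not> P y \<Longrightarrow> map P (interleave m u v) = m"
  by (induction m u v rule: interleave.induct) auto

lemma interleave_filter: "interleave (map P w) (filter P w) (filter (\<lambda>x. \<not> P x) w) = w"
  by (induction w) auto

lemma fits_mask_filter: "fits_mask (map P w) (filter P w) (filter (\<lambda>x. \<not> P x) w)"
  by (induction w) auto

lemma length_filter_interleave:
  "fits_mask m u v \<Longrightarrow> length (filter P (interleave m u v)) = length (filter P u) + length (filter P v)"
  by (induction m u v rule: interleave.induct) auto

lemma inversions_interleave:
  "fits_mask m u v \<Longrightarrow> set u \<inter> set v = {} \<Longrightarrow>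
   even (inversions (interleave m u v) + crossings m + inversions u + inversions v + cross_inversions u v)"
proof (induction m u v rule: interleave.induct)
  case (2 m x xs ys)
  then show ?case by (auto simp: length_filter_interleave)
next
  case (4 m xs y ys)
  then have fits: "fits_mask m xs ys"
    by simp
  then have "length (filter (\<lambda>z. z < y) (interleave m xs ys)) =
             length (filter (\<lambda>z. z < y) xs) + length (filter (\<lambda>z. z < y) ys)"
    by (rule length_filter_interleave)
  moreover have "length (filter (\<lambda>z. z < y) xs) + length (filter (\<lambda>a. y < a) xs) = length xs"
    using 4(3) sum_length_filter_compl[of "\<lambda>z. z < y" xs]
    by (metis (no_types, lifting) disjoint_iff filter_cong linorder_neq_iff list.set_intros(1) not_less_iff_gr_or_eq)
  moreover have "length (filter id m) = length xs"
    using fits by (simp add: fits_mask_def shuffle_masks_def)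
  ultimately have sum_eq: "inversions (interleave (False # m) xs (y # ys)) + crossings (False # m)
      + inversions xs + inversions (y # ys) + cross_inversions xs (y # ys) =
    (inversions (interleave m xs ys) + crossings m + inversions xs + inversions ys + cross_inversions xs ys)
      + 2 * (length (filter (\<lambda>z. z < y) ys) + length xs)"
    by (simp add: cross_inversions_Cons_right)
  moreover have "even (inversions (interleave m xs ys) + crossings m + inversions xs + inversions ys
                       + cross_inversions xs ys)"
    using 4 by auto
  ultimately show ?case
    unfolding sum_eq by simp
qed simp_all

section \<open>Shuffles of words of generators\<close>

definition letters :: "nat list \<Rightarrow> word" where
  "letters w = map (\<lambda>i. {#i#}) w"

definition even_pos_degrees :: "(nat \<Rightarrow> nat) \<Rightarrow> nat set \<Rightarrow> bool" where
  "even_pos_degrees d S \<longleftrightarrow> (\<forall>i\<in>S. even (d i) \<and> 0 < d i)"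

lemma letters_simps [simp]:
  "letters [] = []" "letters (a # x) = {#a#} # letters x" "letters (x @ y) = letters x @ letters y"
  "length (letters x) = length x"
  by (auto simp: letters_def)

lemma take_letters: "take j (letters w) = letters (take j w)"
  and drop_letters: "drop j (letters w) = letters (drop j w)"
  by (simp_all add: letters_def take_map drop_map)

lemma letters_eq_Nil_iff [simp]: "letters w = [] \<longleftrightarrow> w = []"
  by (simp add: letters_def)

lemma wdeg_letters: "wdeg d (letters w) = (\<Sum>i\<leftarrow>w. d i - 1)"
  by (induction w) (auto simp: wdeg_def sdeg_def mdeg_def)

lemma even_wdeg_letters:
  "even_pos_degrees d (set w) \<Longrightarrow> even (wdeg d (letters w)) \<longleftrightarrow> even (length w)"
  unfolding wdeg_letters
proof (induction w)
  case (Cons a w)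
  then have "odd (d a - 1)"
    by (auto simp: even_pos_degrees_def)
  with Cons show ?case
    by (auto simp: even_pos_degrees_def)
qed simp

lemma ks_odd: "odd a \<Longrightarrow> ks a b = (-1) ^ b"
  by (simp add: ks_def minus_one_power_iff)

lemma prepend_sum:
  "prepend x (\<Sum>m\<in>M. Poly_Mapping.single (f m) (c m)) = (\<Sum>m\<in>M. Poly_Mapping.single (x # f m) (c m))"
  by (simp add: prepend_def lin_sum)

lemma shw_letters:
  "even_pos_degrees d (set x \<union> set y) \<Longrightarrow>
   shw d (letters x) (letters y) =
     (\<Sum>m\<in>shuffle_masks (length x) (length y). Poly_Mapping.single (letters (interleave m x y)) ((-1) ^ crossings m))"
proof (induction x arbitrary: y)
  case Nil
  then show ?case by (simp add: shuffle_masks_0_left)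
next
  case (Cons a x)
  note IH = Cons.IH
  from Cons.prems show ?case
  proof (induction y)
    case Nil
    then show ?case using interleave_replicate_True[of "a # x"] by (simp add: shuffle_masks_0_right)
  next
    case (Cons b y)
    define f where "f m = Poly_Mapping.single (letters (interleave m (a # x) (b # y))) ((-1 :: rat) ^ crossings m)"
      for m
    have degs: "even_pos_degrees d (set x \<union> set (b # y))" "even_pos_degrees d (set (a # x) \<union> set y)"
      using Cons.prems by (auto simp: even_pos_degrees_def)
    have "ks (sdeg d {#b#}) (sdeg d {#a#} + wdeg d (letters x)) = (-1) ^ Suc (length x)"
      using Cons.prems even_wdeg_letters[of d x]
      by (auto simp: ks_def sdeg_def mdeg_def even_pos_degrees_def minus_one_power_iff)
    then have "shw d (letters (a # x)) (letters (b # y)) =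
      prepend {#a#} (\<Sum>m\<in>shuffle_masks (length x) (Suc (length y)).
          Poly_Mapping.single (letters (interleave m x (b # y))) ((-1) ^ crossings m))
      + cmul ((-1) ^ Suc (length x)) (prepend {#b#} (\<Sum>m\<in>shuffle_masks (Suc (length x)) (length y).
          Poly_Mapping.single (letters (interleave m (a # x) y)) ((-1) ^ crossings m)))"
      using IH[OF degs(1)] Cons.IH[OF degs(2)] by simp
    also have "\<dots> = (\<Sum>m\<in>shuffle_masks (length x) (Suc (length y)). f (True # m))
        + (\<Sum>m\<in>shuffle_masks (Suc (length x)) (length y). f (False # m))"
      unfolding prepend_sum cmul_sum f_def
      by (intro arg_cong2[where f = "(+)"] sum.cong) (auto simp: shuffle_masks_def power_add)
    also have "\<dots> = (\<Sum>m\<in>shuffle_masks (length (a # x)) (length (b # y)). f m)"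
      by (simp add: sum_shuffle_masks_Suc_Suc)
    finally show ?case by (simp only: f_def)
  qed
qed

section \<open>Antisymmetrised words\<close>

definition antisymmetrization :: "(nat \<Rightarrow> nat) \<Rightarrow> nat set \<Rightarrow> (word \<Rightarrow>\<^sub>0 rat)" where
  "antisymmetrization \<pi> A =
     (\<Sum>w\<in>permutations_of_set A. Poly_Mapping.single (letters (map \<pi> w)) ((-1) ^ inversions w))"

lemma antisymmetrization_empty [simp]: "antisymmetrization \<pi> {} = Poly_Mapping.single [] 1"
  by (simp add: antisymmetrization_def)

lemma antisymmetrization_singleton: "antisymmetrization id {i} = Poly_Mapping.single [{#i#}] 1"
  by (simp add: antisymmetrization_def)

lemma interleave_bij_betw:
  assumes "finite A" "finite B" "A \<inter> B = {}"
  shows "bij_betw (\<lambda>(u, v, m). interleave m u v)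
           (permutations_of_set A \<times> permutations_of_set B \<times> shuffle_masks (card A) (card B))
           (permutations_of_set (A \<union> B))"
    (is "bij_betw ?merge ?T ?P")
proof -
  define split where "split w = (filter (\<lambda>x. x \<in> A) w, filter (\<lambda>x. x \<notin> A) w, map (\<lambda>x. x \<in> A) w)" for w
  have merge_in: "?merge x \<in> ?P" and split_merge: "split (?merge x) = x" if "x \<in> ?T" for x
  proof -
    obtain u v m where x: "x = (u, v, m)" and u: "u \<in> permutations_of_set A"
      and v: "v \<in> permutations_of_set B" and "m \<in> shuffle_masks (card A) (card B)"
      using \<open>x \<in> ?T\<close> by auto
    then have fits: "fits_mask m u v"
      by (simp add: fits_mask_def length_finite_permutations_of_set)
    then have mset_eq: "mset (interleave m u v) = mset (u @ v)"
      by (simp add: mset_interleave)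
    have "distinct (u @ v)" "set (u @ v) = A \<union> B"
      using u v assms(3) by (auto dest: permutations_of_setD)
    then show "?merge x \<in> ?P"
      using mset_eq_imp_distinct_iff[OF mset_eq] mset_eq_setD[OF mset_eq] x
      by (simp add: permutations_of_set_def)
    have "\<forall>a\<in>set u. a \<in> A" "\<forall>b\<in>set v. b \<notin> A"
      using u v assms(3) by (auto dest: permutations_of_setD)
    with fits show "split (?merge x) = x"
      by (simp add: x split_def filter_interleave_left filter_interleave_right map_interleave_mask)
  qed
  have split_in: "split w \<in> ?T" and merge_split: "?merge (split w) = w" if "w \<in> ?P" for w
  proof -
    have w: "distinct w" "set w = A \<union> B"
      using \<open>w \<in> ?P\<close> by (auto dest: permutations_of_setD)
    then have "filter (\<lambda>x. x \<in> A) w \<in> permutations_of_set A"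
              "filter (\<lambda>x. x \<notin> A) w \<in> permutations_of_set B"
      using assms(3) by (auto simp: permutations_of_set_def)
    moreover have "fits_mask (map (\<lambda>x. x \<in> A) w) (filter (\<lambda>x. x \<in> A) w) (filter (\<lambda>x. x \<notin> A) w)"
      using fits_mask_filter[of "\<lambda>x. x \<in> A" w] by simp
    ultimately show "split w \<in> ?T"
      by (simp add: split_def fits_mask_def length_finite_permutations_of_set)
    show "?merge (split w) = w"
      using interleave_filter[of "\<lambda>x. x \<in> A" w] by (simp add: split_def)
  qed
  show ?thesis
    by (intro bij_betw_byWitness[where f' = split] ballI image_subsetI)
       (simp_all only: merge_in split_merge split_in merge_split)
qed

lemma sign_interleave:
  assumes "u \<in> permutations_of_set A" "v \<in> permutations_of_set B" "fits_mask m u v" "A \<inter> B = {}"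
  shows "(-1 :: rat) ^ inversions u * (-1) ^ inversions v * (-1) ^ crossings m =
         (-1) ^ set_inversions A B * (-1) ^ inversions (interleave m u v)"
proof -
  have "set_inversions A B = cross_inversions u v"
    using assms(1,2) by (simp add: cross_inversions_distinct permutations_of_set_def)
  moreover have "even (inversions (interleave m u v) + crossings m + inversions u + inversions v + cross_inversions u v)"
    using assms by (intro inversions_interleave) (auto simp: permutations_of_set_def)
  ultimately show ?thesis
    by (simp add: power_add[symmetric] minus_one_power_iff) presburger
qed

lemma shuffle_antisymmetrization_disjoint:
  assumes "finite A" "finite B" "A \<inter> B = {}" "even_pos_degrees d (\<pi> ` (A \<union> B))"
  shows "lin2 (shw d) (antisymmetrization \<pi> A) (antisymmetrization \<pi> B) =
         cmul ((-1) ^ set_inversions A B) (antisymmetrization \<pi> (A \<union> B))"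
proof -
  let ?M = "shuffle_masks (card A) (card B)"
  define g where "g w = Poly_Mapping.single (letters (map \<pi> w)) ((-1) ^ set_inversions A B * (-1 :: rat) ^ inversions w)"
    for w
  have "lin2 (shw d) (antisymmetrization \<pi> A) (antisymmetrization \<pi> B) =
    (\<Sum>u\<in>permutations_of_set A. \<Sum>v\<in>permutations_of_set B.
       cmul ((-1) ^ inversions u * (-1) ^ inversions v) (shw d (letters (map \<pi> u)) (letters (map \<pi> v))))"
    by (simp add: lin2_eq_lin_left antisymmetrization_def lin_sum cmul_sum mult.commute)
  also have "\<dots> = (\<Sum>u\<in>permutations_of_set A. \<Sum>v\<in>permutations_of_set B. \<Sum>m\<in>?M. g (interleave m u v))"
  proof (intro sum.cong refl)
    fix u v assume uv: "u \<in> permutations_of_set A" "v \<in> permutations_of_set B"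
    then have "even_pos_degrees d (set (map \<pi> u) \<union> set (map \<pi> v))"
      using assms(4) by (auto simp: permutations_of_set_def even_pos_degrees_def)
    moreover have "fits_mask m u v" if "m \<in> ?M" for m
      using that uv by (simp add: fits_mask_def length_finite_permutations_of_set)
    ultimately show "cmul ((-1) ^ inversions u * (-1) ^ inversions v) (shw d (letters (map \<pi> u)) (letters (map \<pi> v)))
        = (\<Sum>m\<in>?M. g (interleave m u v))"
      using uv assms(3)
      by (auto simp: shw_letters length_finite_permutations_of_set map_interleave cmul_sum g_def
          sign_interleave intro!: sum.cong)
  qed
  also have "\<dots> = (\<Sum>x\<in>permutations_of_set A \<times> permutations_of_set B \<times> ?M. g ((\<lambda>(u, v, m). interleave m u v) x))"
    by (simp add: sum.cartesian_product prod.case_distrib)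
  also have "\<dots> = (\<Sum>w\<in>permutations_of_set (A \<union> B). g w)"
    using interleave_bij_betw[OF assms(1-3)] by (rule sum.reindex_bij_betw)
  finally show ?thesis
    by (simp add: g_def antisymmetrization_def cmul_sum)
qed

lemma antisymmetrization_image:
  assumes "strict_mono_on A f"
  shows "antisymmetrization \<pi> (f ` A) = antisymmetrization (\<pi> \<circ> f) A"
proof -
  have "inj_on f A"
    using assms by (rule strict_mono_on_imp_inj_on)
  then have "inj_on (map f) (permutations_of_set A)"
    by (intro inj_on_mapI inj_on_subset[OF \<open>inj_on f A\<close>]) (auto dest: permutations_of_setD)
  moreover have "inversions (map f w) = inversions w" if "w \<in> permutations_of_set A" for w
    using that assms by (intro inversions_map_mono) (auto dest: permutations_of_setD strict_mono_on_less)
  ultimately show ?thesis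
    unfolding antisymmetrization_def permutations_of_set_image_inj[OF \<open>inj_on f A\<close>]
    by (simp add: sum.reindex)
qed

lemma antisymmetrization_collapse:
  assumes "x \<in> C" "Suc x \<in> C" "\<pi> x = \<pi> (Suc x)"
  shows "antisymmetrization \<pi> C = 0"
  unfolding antisymmetrization_def
proof (rule sum_involution_eq_0[where h = "map (transpose x (Suc x))"])
  let ?\<tau> = "transpose x (Suc x)"
  fix w assume w: "w \<in> permutations_of_set C"
  then have "map ?\<tau> w \<in> map ?\<tau> ` permutations_of_set C"
    by blast
  then show "map ?\<tau> w \<in> permutations_of_set C"
    by (simp only: permutations_of_set_image_permutes[OF permutes_swap_id[OF assms(1,2)]])
  show "map ?\<tau> (map ?\<tau> w) = w"
    by simp
  have "x \<in> set w" "Suc x \<in> set w" "distinct w"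
    using w assms(1,2) by (auto dest: permutations_of_setD)
  then have "odd (inversions (map ?\<tau> w) + inversions w)"
    by (intro inversions_transpose_Suc)
  then have sign: "(-1 :: rat) ^ inversions (map ?\<tau> w) = - ((-1) ^ inversions w)"
    by (auto simp: minus_one_power_iff)
  have word: "map \<pi> (map ?\<tau> w) = map \<pi> w"
    using assms(3) by (auto simp: transpose_def)
  show "Poly_Mapping.single (letters (map \<pi> (map ?\<tau> w))) ((-1 :: rat) ^ inversions (map ?\<tau> w))
      + Poly_Mapping.single (letters (map \<pi> w)) ((-1) ^ inversions w) = 0"
    unfolding sign word single_uminus by simp
  show "map ?\<tau> w \<noteq> w"
  proof
    assume "map ?\<tau> w = w"
    then have "\<forall>z\<in>set w. ?\<tau> z = z"
      by (metis map_eq_conv map_ident)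
    with \<open>x \<in> set w\<close> show False
      by (metis Suc_n_not_n transpose_apply_first)
  qed
qed

text \<open>Relabelling A by even and B by odd numbers turns the shuffle into an antisymmetrisation over a
  disjoint union, in which a common element c gives two letters 2c and 2c+1 identified by halving.\<close>
lemma shuffle_antisymmetrization_overlap:
  assumes "finite A" "finite B" "A \<inter> B \<noteq> {}" "even_pos_degrees d (A \<union> B)"
  shows "lin2 (shw d) (antisymmetrization id A) (antisymmetrization id B) = 0"
proof -
  let ?half = "\<lambda>x :: nat. x div 2"
  define A' where "A' = (\<lambda>a. 2 * a) ` A"
  define B' where "B' = (\<lambda>b. 2 * b + 1) ` B"
  have "antisymmetrization id A = antisymmetrization ?half A'"
    unfolding A'_def by (subst antisymmetrization_image) (auto simp: strict_mono_on_def comp_def id_def)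
  moreover have "antisymmetrization id B = antisymmetrization ?half B'"
    unfolding B'_def by (subst antisymmetrization_image) (auto simp: strict_mono_on_def comp_def id_def)
  moreover have "A' \<inter> B' = {}"
    unfolding A'_def B'_def by auto presburger
  moreover have "?half ` (A' \<union> B') = A \<union> B"
    unfolding A'_def B'_def image_Un image_image by simp
  ultimately have "lin2 (shw d) (antisymmetrization id A) (antisymmetrization id B) =
      cmul ((-1) ^ set_inversions A' B') (antisymmetrization ?half (A' \<union> B'))"
    using assms by (auto intro: shuffle_antisymmetrization_disjoint simp: A'_def B'_def)
  moreover obtain c where "c \<in> A" "c \<in> B"
    using assms(3) by auto
  then have "antisymmetrization ?half (A' \<union> B') = 0"
    by (intro antisymmetrization_collapse[of "2 * c"]) (auto simp: A'_def B'_def)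
  ultimately show ?thesis
    by simp
qed

lemma fb_eq_antisymmetrization:
  assumes "finite S" "even_pos_degrees d S"
  shows "fb d S = antisymmetrization id S"
proof -
  have "foldr (\<lambda>i acc. shuffle d (Poly_Mapping.single [{#i#}] 1) acc) l (Poly_Mapping.single [] 1) =
        antisymmetrization id (set l)"
    if "sorted_wrt (<) l" "even_pos_degrees d (set l)" for l
    using that
  proof (induction l)
    case (Cons i l)
    have "{(a, b). a \<in> {i} \<and> b \<in> set l \<and> b < a} = {}"
      using Cons.prems(1) by auto
    then have "set_inversions {i} (set l) = 0"
      unfolding set_inversions_def by (simp only: card.empty)
    moreover have "lin2 (shw d) (antisymmetrization id {i}) (antisymmetrization id (set l)) =
        cmul ((-1) ^ set_inversions {i} (set l)) (antisymmetrization id ({i} \<union> set l))"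
      using Cons.prems by (intro shuffle_antisymmetrization_disjoint) (auto simp: even_pos_degrees_def)
    ultimately have "lin2 (shw d) (antisymmetrization id {i}) (antisymmetrization id (set l)) =
        antisymmetrization id (set (i # l))"
      by simp
    moreover have "foldr (\<lambda>i acc. shuffle d (Poly_Mapping.single [{#i#}] 1) acc) l (Poly_Mapping.single [] 1) =
        antisymmetrization id (set l)"
      using Cons by (auto simp: even_pos_degrees_def id_def)
    ultimately show ?case
      by (simp only: foldr_Cons o_apply shuffle_def antisymmetrization_singleton[symmetric])
  qed simp
  then show ?thesis
    using assms by (simp add: fb_def)
qed

section \<open>The coproduct of exterior monomials\<close>

definition exterior_coproduct :: "nat set \<Rightarrow> ((nat set \<times> nat set) \<Rightarrow>\<^sub>0 rat)" where
  "exterior_coproduct S =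
     (\<Sum>A\<in>Pow S. Poly_Mapping.single (A, S - A) ((-1) ^ set_inversions A (S - A)))"

lemma tens_single: "tens (Poly_Mapping.single a 1) (Poly_Mapping.single b 1) = Poly_Mapping.single (a, b) 1"
  by (simp add: tens_def lin2_eq_lin_left)

lemma wedgeb_empty_left: "wedgeb {} X = Poly_Mapping.single X 1"
  by (simp add: wedgeb_def)

lemma wedgeb_insert_min:
  assumes "i \<notin> A" "\<forall>b\<in>A. i < b"
  shows "wedgeb {i} A = Poly_Mapping.single (insert i A) 1"
proof -
  have "{(a, b). a \<in> {i} \<and> b \<in> A \<and> b < a} = {}"
    using assms(2) by auto
  then have "card {(a, b). a \<in> {i} \<and> b \<in> A \<and> b < a} = 0"
    by (simp only: card.empty)
  with assms(1) show ?thesis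
    unfolding wedgeb_def by simp
qed

lemma even_edeg: "finite A \<Longrightarrow> even_pos_degrees d A \<Longrightarrow> even (edeg d A) \<longleftrightarrow> even (card A)"
proof (induction A rule: finite_induct)
  case (insert a A)
  then have "odd (d a - 1)" "even_pos_degrees d A"
    by (auto simp: even_pos_degrees_def)
  with insert show ?case
    by (simp add: edeg_def)
qed (simp add: edeg_def)

lemma exterior_coproduct_insert_min:
  assumes "finite S" "i \<notin> S" "\<forall>b\<in>S. i < b"
  shows "exterior_coproduct (insert i S) =
    (\<Sum>A\<in>Pow S. Poly_Mapping.single (insert i A, S - A) ((-1) ^ set_inversions A (S - A)))
    + (\<Sum>A\<in>Pow S. Poly_Mapping.single (A, insert i (S - A)) ((-1) ^ (set_inversions A (S - A) + card A)))"
proof -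
  let ?g = "\<lambda>A. Poly_Mapping.single (A, insert i S - A) ((-1 :: rat) ^ set_inversions A (insert i S - A))"
  have "exterior_coproduct (insert i S) = sum ?g (Pow S) + sum ?g (insert i ` Pow S)"
    unfolding exterior_coproduct_def Pow_insert using assms(1,2)
    by (intro sum.union_disjoint) auto
  moreover have "sum ?g (insert i ` Pow S) =
      (\<Sum>A\<in>Pow S. Poly_Mapping.single (insert i A, S - A) ((-1) ^ set_inversions A (S - A)))"
  proof -
    have "inj_on (insert i) (Pow S)"
      using assms(2) by (auto simp: inj_on_def)
    moreover have "insert i S - insert i A = S - A" if "A \<in> Pow S" for A
      using that assms(2) by auto
    ultimately show ?thesis
      using assms(3) by (simp add: sum.reindex set_inversions_insert_min_left)
  qed
  moreover have "?g A = Poly_Mapping.single (A, insert i (S - A)) ((-1) ^ (set_inversions A (S - A) + card A))"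
    if "A \<in> Pow S" for A
  proof -
    have "insert i S - A = insert i (S - A)"
      using that assms(2) by auto
    moreover have "set_inversions A (insert i (S - A)) = set_inversions A (S - A) + card A"
      using that assms by (intro set_inversions_insert_min_right) (auto intro: finite_subset)
    ultimately show ?thesis
      by simp
  qed
  ultimately show ?thesis
    by (simp add: add.commute)
qed

lemma coHb_eq_exterior_coproduct:
  assumes "finite S" "even_pos_degrees d S"
  shows "coHb d S = exterior_coproduct S"
proof -
  let ?U = "\<lambda>i. Poly_Mapping.single ({i}, {}) 1 + Poly_Mapping.single ({}, {i}) (1 :: rat)"
  have "foldr (\<lambda>i acc. tmul d (?U i) acc) l (Poly_Mapping.single ({}, {}) 1) = exterior_coproduct (set l)"
    if "sorted_wrt (<) l" "even_pos_degrees d (set l)" for l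
    using that
  proof (induction l)
    case Nil
    then show ?case by (simp add: exterior_coproduct_def set_inversions_def)
  next
    case (Cons i l)
    let ?S = "set l"
    have less: "\<forall>b\<in>?S. i < b" and "i \<notin> ?S" and degs: "even_pos_degrees d ?S" "odd (edeg d {i})"
      using Cons.prems by (auto simp: even_pos_degrees_def edeg_def)
    let ?G = "\<lambda>(A, B) (C, E). cmul (ks (edeg d B) (edeg d C)) (tens (wedgeb A C) (wedgeb B E))"
    have "lin (?G ({i}, {})) (exterior_coproduct ?S) =
        (\<Sum>A\<in>Pow ?S. Poly_Mapping.single (insert i A, ?S - A) ((-1) ^ set_inversions A (?S - A)))"
      unfolding exterior_coproduct_def lin_sum lin_single
    proof (intro sum.cong refl)
      fix A assume "A \<in> Pow ?S"
      then have "wedgeb {i} A = Poly_Mapping.single (insert i A) 1"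
        using less \<open>i \<notin> ?S\<close> by (intro wedgeb_insert_min) auto
      then show "cmul ((-1) ^ set_inversions A (?S - A)) (?G ({i}, {}) (A, ?S - A)) =
          Poly_Mapping.single (insert i A, ?S - A) ((-1) ^ set_inversions A (?S - A))"
        by (simp add: wedgeb_empty_left tens_single ks_def edeg_def)
    qed
    moreover have "lin (?G ({}, {i})) (exterior_coproduct ?S) =
        (\<Sum>A\<in>Pow ?S. Poly_Mapping.single (A, insert i (?S - A)) ((-1) ^ (set_inversions A (?S - A) + card A)))"
      unfolding exterior_coproduct_def lin_sum lin_single
    proof (intro sum.cong refl)
      fix A assume A: "A \<in> Pow ?S"
      then have "wedgeb {i} (?S - A) = Poly_Mapping.single (insert i (?S - A)) 1"
        using less \<open>i \<notin> ?S\<close> by (intro wedgeb_insert_min) auto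
      moreover from A have "ks (edeg d {i}) (edeg d A) = (-1) ^ card A"
        using degs even_edeg[of A d] by (auto simp: ks_odd minus_one_power_iff even_pos_degrees_def
            intro: finite_subset)
      ultimately show "cmul ((-1) ^ set_inversions A (?S - A)) (?G ({}, {i}) (A, ?S - A)) =
          Poly_Mapping.single (A, insert i (?S - A)) ((-1) ^ (set_inversions A (?S - A) + card A))"
        by (simp add: wedgeb_empty_left tens_single power_add mult.commute)
    qed
    moreover have "foldr (\<lambda>i acc. tmul d (?U i) acc) l (Poly_Mapping.single ({}, {}) 1) = exterior_coproduct ?S"
      using Cons by (auto simp: even_pos_degrees_def)
    ultimately show ?case
      using exterior_coproduct_insert_min[OF _ \<open>i \<notin> ?S\<close> less]
      by (simp add: tmul_def lin2_eq_lin_left lin_add)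
  qed
  then show ?thesis
    using assms by (simp add: coHb_def)
qed

section \<open>Compatibility of f with the structure maps\<close>

lemma split_ordering_bij_betw:
  assumes "finite S"
  shows "bij_betw (\<lambda>(w, k). (set (take k w), take k w, drop k w))
           (permutations_of_set S \<times> {0..card S})
           (SIGMA A:Pow S. permutations_of_set A \<times> permutations_of_set (S - A))"
    (is "bij_betw ?cut ?W ?P")
proof (rule bij_betw_byWitness[where f' = "\<lambda>(A, u, v). (u @ v, length u)"])
  show "\<forall>x\<in>?W. (\<lambda>(A, u, v). (u @ v, length u)) (?cut x) = x"
    by (auto simp: length_finite_permutations_of_set)
  show "\<forall>y\<in>?P. ?cut ((\<lambda>(A, u, v). (u @ v, length u)) y) = y"
    by (auto dest: permutations_of_setD)
  show "?cut ` ?W \<subseteq> ?P"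
  proof
    fix y assume "y \<in> ?cut ` ?W"
    then obtain w k where y: "y = (set (take k w), take k w, drop k w)" and "w \<in> permutations_of_set S"
      by auto
    then have "distinct (take k w @ drop k w)" "set (take k w @ drop k w) = S"
      by (auto dest: permutations_of_setD)
    then show "y \<in> ?P"
      unfolding y set_append distinct_append by (auto simp: permutations_of_set_def)
  qed
  show "(\<lambda>(A, u, v). (u @ v, length u)) ` ?P \<subseteq> ?W"
  proof
    fix x assume "x \<in> (\<lambda>(A, u, v). (u @ v, length u)) ` ?P"
    then obtain A u v where x: "x = (u @ v, length u)" and "A \<subseteq> S"
      and uv: "u \<in> permutations_of_set A" "v \<in> permutations_of_set (S - A)"
      by auto
    moreover from this have "length u \<le> card S"
      using assms by (simp add: length_finite_permutations_of_set card_mono)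
    ultimately show "x \<in> ?W"
      by (auto simp: permutations_of_set_def)
  qed
qed

lemma sign_split_ordering:
  assumes "w \<in> permutations_of_set S"
  shows "(-1 :: rat) ^ inversions w = (-1) ^ set_inversions (set (take k w)) (S - set (take k w))
           * ((-1) ^ inversions (take k w) * (-1) ^ inversions (drop k w))"
proof -
  have "distinct (take k w @ drop k w)" "set (take k w @ drop k w) = S"
    using assms by (auto dest: permutations_of_setD)
  then have "S - set (take k w) = set (drop k w)" "distinct (take k w)" "distinct (drop k w)"
    unfolding set_append distinct_append by auto
  then have "set_inversions (set (take k w)) (S - set (take k w)) = cross_inversions (take k w) (drop k w)"
    by (simp add: cross_inversions_distinct)
  moreover have "inversions w = inversions (take k w) + inversions (drop k w) + cross_inversions (take k w) (drop k w)"
    using inversions_append[of "take k w" "drop k w"] by simp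
  ultimately show ?thesis
    by (simp add: power_add)
qed

lemma tens_antisymmetrization:
  "tens (antisymmetrization id A) (antisymmetrization id B) =
   (\<Sum>(u, v)\<in>permutations_of_set A \<times> permutations_of_set B.
      Poly_Mapping.single (letters u, letters v) ((-1) ^ inversions u * (-1) ^ inversions v))"
  unfolding tens_def lin2_eq_lin_left antisymmetrization_def lin_sum lin_single cmul_sum
  by (simp add: sum.cartesian_product mult.commute)

lemma deconc_antisymmetrization:
  assumes "finite S" "even_pos_degrees d S"
  shows "deconc (antisymmetrization id S) = ftens d (exterior_coproduct S)"
proof -
  define g where "g y = (case y of (A, u, v) \<Rightarrow> Poly_Mapping.single (letters u, letters v)
      ((-1) ^ set_inversions A (S - A) * ((-1 :: rat) ^ inversions u * (-1) ^ inversions v)))" for y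
  have "deconc (antisymmetrization id S) =
      (\<Sum>w\<in>permutations_of_set S. \<Sum>k\<in>{0..card S}. g (set (take k w), take k w, drop k w))"
    unfolding deconc_def antisymmetrization_def lin_sum lin_single
    by (intro sum.cong refl)
       (simp add: g_def cmul_sum length_finite_permutations_of_set take_letters drop_letters
         sign_split_ordering[symmetric])
  also have "\<dots> = (\<Sum>(w, k)\<in>permutations_of_set S \<times> {0..card S}. g (set (take k w), take k w, drop k w))"
    by (rule sum.cartesian_product)
  also have "\<dots> = (\<Sum>y\<in>(SIGMA A:Pow S. permutations_of_set A \<times> permutations_of_set (S - A)). g y)"
    using split_ordering_bij_betw[OF assms(1)] unfolding case_prod_unfold by (rule sum.reindex_bij_betw)
  also have "\<dots> = (\<Sum>A\<in>Pow S. \<Sum>uv\<in>permutations_of_set A \<times> permutations_of_set (S - A). g (A, uv))"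
    using assms(1) by (subst sum.Sigma) auto
  also have "\<dots> = ftens d (exterior_coproduct S)"
    unfolding ftens_def exterior_coproduct_def lin_sum lin_single
  proof (intro sum.cong refl)
    fix A assume "A \<in> Pow S"
    then have "fb d A = antisymmetrization id A" "fb d (S - A) = antisymmetrization id (S - A)"
      using assms by (auto intro!: fb_eq_antisymmetrization intro: finite_subset simp: even_pos_degrees_def subset_iff)
    then show "(\<Sum>uv\<in>permutations_of_set A \<times> permutations_of_set (S - A). g (A, uv)) =
        cmul ((-1) ^ set_inversions A (S - A)) (case (A, S - A) of (A, B) \<Rightarrow> tens (fb d A) (fb d B))"
      by (simp add: tens_antisymmetrization cmul_sum g_def case_prod_unfold)
  qed
  finally show ?thesis .
qed

lemma barw_letters:
  assumes "even_pos_degrees d (set w)"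
  shows "barw d (letters w) = (\<Sum>j<length w - 1.
     Poly_Mapping.single (letters (take j w) @ [{#w ! j#} + {#w ! Suc j#}] @ letters (drop (Suc (Suc j)) w))
       ((-1) ^ Suc j))"
  unfolding barw_def
proof (rule sum.cong)
  fix j assume "j \<in> {..<length w - 1}"
  then have "length (take (Suc j) w) = Suc j" "even_pos_degrees d (set (take (Suc j) w))"
    using assms by (auto simp: even_pos_degrees_def dest: in_set_takeD)
  then have "(if even (wdeg d (take (Suc j) (letters w))) then 1 else -1) = (-1 :: rat) ^ Suc j"
    by (simp add: take_letters even_wdeg_letters minus_one_power_iff)
  with \<open>j \<in> _\<close> show "cmul (if even (wdeg d (take (Suc j) (letters w))) then 1 else -1)
      (Poly_Mapping.single (take j (letters w) @ [letters w ! j + letters w ! Suc j] @ drop (Suc (Suc j)) (letters w)) 1) =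
    Poly_Mapping.single (letters (take j w) @ [{#w ! j#} + {#w ! Suc j#}] @ letters (drop (Suc (Suc j)) w))
       ((-1) ^ Suc j)"
    by (simp add: letters_def take_map drop_map)
qed simp

lemma bar_antisymmetrization:
  assumes "even_pos_degrees d S"
  shows "bar d (antisymmetrization id S) = 0"
proof -
  define F where "F x = (case x of (w, j) \<Rightarrow>
      Poly_Mapping.single (letters (take j w) @ [{#w ! j#} + {#w ! Suc j#}] @ letters (drop (Suc (Suc j)) w))
        ((-1) ^ inversions w * (-1 :: rat) ^ Suc j))" for x
  define swap where "swap x = (case x of (w, j) \<Rightarrow> (take j w @ w ! Suc j # w ! j # drop (Suc (Suc j)) w, j))"
    for x :: "nat list \<times> nat"
  have "bar d (antisymmetrization id S) =
      (\<Sum>w\<in>permutations_of_set S. \<Sum>j<card S - 1. F (w, j))"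
    unfolding bar_def antisymmetrization_def lin_sum lin_single
  proof (intro sum.cong refl)
    fix w assume w: "w \<in> permutations_of_set S"
    then have "even_pos_degrees d (set w)"
      using assms by (auto simp: even_pos_degrees_def dest: permutations_of_setD)
    with w show "cmul ((-1) ^ inversions w) (barw d (letters (map id w))) = (\<Sum>j<card S - 1. F (w, j))"
      by (simp add: barw_letters cmul_sum F_def length_finite_permutations_of_set)
  qed
  also have "\<dots> = (\<Sum>x\<in>permutations_of_set S \<times> {..<card S - 1}. F x)"
    by (simp add: sum.cartesian_product F_def case_prod_unfold)
  also have "\<dots> = 0"
  proof (rule sum_involution_eq_0[where h = swap])
    fix x assume "x \<in> permutations_of_set S \<times> {..<card S - 1}"
    then obtain w j where x: "x = (w, j)" and w: "w \<in> permutations_of_set S" and "Suc j < length w"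
      by (auto simp: length_finite_permutations_of_set)
    then obtain p a b r where wsplit: "w = p @ a # b # r" and p: "length p = j"
      by (metis Cons_nth_drop_Suc Suc_lessD append_take_drop_id length_take min.absorb4)
    have "distinct w" "set w = S"
      using w by (auto dest: permutations_of_setD)
    then have "a \<noteq> b" "p @ b # a # r \<in> permutations_of_set S"
      unfolding wsplit by (auto simp: permutations_of_set_def)
    moreover have swap_x: "swap x = (p @ b # a # r, j)"
      unfolding x wsplit swap_def using p by (simp add: nth_append)
    ultimately show "swap x \<in> permutations_of_set S \<times> {..<card S - 1}" "swap (swap x) = x" "swap x \<noteq> x"
      using \<open>x \<in> _\<close> p by (auto simp: x wsplit swap_def nth_append)
    have "odd (inversions (p @ a # b # r) + inversions (p @ b # a # r))"
      using \<open>a \<noteq> b\<close> by (rule inversions_swap_adjacent)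
    then have "(-1 :: rat) ^ inversions (p @ b # a # r) = - ((-1) ^ inversions (p @ a # b # r))"
      by (auto simp: minus_one_power_iff)
    then show "F (swap x) + F x = 0"
      unfolding swap_x unfolding x wsplit F_def using p
      by (simp add: nth_append add_mset_commute single_uminus)
  qed
  finally show ?thesis .
qed

lemma wdeg_keys_antisymmetrization:
  assumes "w \<in> Poly_Mapping.keys (antisymmetrization id S)"
  shows "wdeg d w = edeg d S"
proof -
  have "Poly_Mapping.keys (antisymmetrization id S) \<subseteq> letters ` permutations_of_set S"
    unfolding antisymmetrization_def by (rule order_trans[OF keys_sum]) auto
  with assms obtain u where "u \<in> permutations_of_set S" "w = letters u"
    by auto
  then show ?thesis
    using sum_list_distinct_conv_sum_set[of u "\<lambda>i. d i - 1"]
    by (simp add: wdeg_letters edeg_def permutations_of_set_def)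
qed

lemma lookup_antisymmetrization_Nil:
  "Poly_Mapping.lookup (antisymmetrization id S) [] = (if S = {} then 1 else 0)"
proof -
  have "w \<noteq> []" if "w \<in> permutations_of_set S" "S \<noteq> {}" for w
    using that by (auto dest: permutations_of_setD)
  then show ?thesis
    by (auto simp: antisymmetrization_def lookup_sum lookup_single when_def intro!: sum.neutral)
qed

lemma fmap_wedgeb:
  assumes "finite (A \<union> B)" "even_pos_degrees d (A \<union> B)"
  shows "fmap d (wedgeb A B) = lin2 (shw d) (fb d A) (fb d B)"
proof -
  have fb: "fb d A = antisymmetrization id A" "fb d B = antisymmetrization id B"
    using assms by (auto intro!: fb_eq_antisymmetrization simp: even_pos_degrees_def)
  show ?thesis
  proof (cases "A \<inter> B = {}")
    case True
    then have "wedgeb A B = Poly_Mapping.single (A \<union> B) ((-1) ^ set_inversions A B)"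
      by (simp add: wedgeb_def set_inversions_def minus_one_power_iff)
    with True assms show ?thesis
      unfolding fb by (simp add: fmap_def shuffle_antisymmetrization_disjoint fb_eq_antisymmetrization)
  next
    case False
    with assms show ?thesis
      unfolding fb by (simp add: fmap_def wedgeb_def shuffle_antisymmetrization_overlap)
  qed
qed

context
  fixes d :: "nat \<Rightarrow> nat" and x :: "nat set \<Rightarrow>\<^sub>0 rat"
  assumes keys_admissible: "\<And>S. S \<in> Poly_Mapping.keys x \<Longrightarrow> finite S \<and> even_pos_degrees d S"
begin

lemma bar_fmap: "bar d (fmap d x) = fmap d (dH x)"
proof -
  have "bar d (fmap d x) = lin (\<lambda>S. bar d (fb d S)) x"
    unfolding bar_def fmap_def lin_lin ..
  also have "\<dots> = 0"
    using keys_admissible by (intro lin_eq_zero) (simp add: fb_eq_antisymmetrization bar_antisymmetrization)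
  finally show ?thesis
    by (simp add: dH_def fmap_def)
qed

lemma deconc_fmap: "deconc (fmap d x) = ftens d (coH d x)"
proof -
  have "deconc (fmap d x) = lin (\<lambda>S. deconc (fb d S)) x"
    unfolding deconc_def fmap_def lin_lin ..
  also have "\<dots> = lin (\<lambda>S. ftens d (coHb d S)) x"
    using keys_admissible
    by (intro lin_cong) (simp add: fb_eq_antisymmetrization deconc_antisymmetrization coHb_eq_exterior_coproduct)
  also have "\<dots> = ftens d (coH d x)"
    unfolding ftens_def coH_def lin_lin ..
  finally show ?thesis .
qed

lemma epsT_fmap: "epsT (fmap d x) = epsH x"
proof -
  have "epsT (fmap d x) = (\<Sum>S\<in>Poly_Mapping.keys x. Poly_Mapping.lookup x S * Poly_Mapping.lookup (fb d S) [])"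
    unfolding epsT_def fmap_def lookup_lin ..
  also have "\<dots> = (\<Sum>S\<in>Poly_Mapping.keys x. if S = {} then Poly_Mapping.lookup x S else 0)"
    using keys_admissible
    by (intro sum.cong refl) (simp add: fb_eq_antisymmetrization lookup_antisymmetrization_Nil)
  also have "\<dots> = epsH x"
    by (simp add: epsH_def in_keys_iff)
  finally show ?thesis .
qed

end

lemma fmap_wedge:
  assumes "\<And>A B. A \<in> Poly_Mapping.keys x \<Longrightarrow> B \<in> Poly_Mapping.keys y \<Longrightarrow>
             finite (A \<union> B) \<and> even_pos_degrees d (A \<union> B)"
  shows "fmap d (wedge x y) = shuffle d (fmap d x) (fmap d y)"
proof -
  have "fmap d (wedge x y) = lin (\<lambda>A. lin (\<lambda>B. fmap d (wedgeb A B)) y) x"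
    unfolding fmap_def wedge_def lin2_eq_lin_left lin_lin ..
  also have "\<dots> = lin (\<lambda>A. lin (\<lambda>B. lin2 (shw d) (fb d A) (fb d B)) y) x"
    using assms by (intro lin_cong) (simp add: fmap_wedgeb)
  also have "\<dots> = shuffle d (fmap d x) (fmap d y)"
    unfolding shuffle_def fmap_def lin2_lin ..
  finally show ?thesis .
qed

theorem lemma5p5:
  fixes n :: nat and d :: "nat \<Rightarrow> nat"
  assumes degs: "\<forall>i<n. even (d i) \<and> 0 < d i"
  shows
    \<comment> \<open>f preserves degrees\<close>
    "(\<forall>S. S \<subseteq> {..<n} \<longrightarrow> (\<forall>w\<in>Poly_Mapping.keys (fb d S). wdeg d w = edeg d S))
     \<and> (\<forall>x y :: nat set \<Rightarrow>\<^sub>0 rat.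
          Poly_Mapping.keys x \<subseteq> Pow {..<n} \<longrightarrow> Poly_Mapping.keys y \<subseteq> Pow {..<n} \<longrightarrow>
            \<comment> \<open>map of differential graded coalgebras\<close>
            bar d (fmap d x) = fmap d (dH x)
          \<and> deconc (fmap d x) = ftens d (coH d x)
          \<and> epsT (fmap d x) = epsH x
            \<comment> \<open>hence also a map of algebras (so of dg Hopf algebras)\<close>
          \<and> fmap d (wedge x y) = shuffle d (fmap d x) (fmap d y))
     \<and> fmap d (Poly_Mapping.single {} 1) = Poly_Mapping.single [] 1"
proof -
  have admissible: "finite S \<and> even_pos_degrees d S" if "S \<subseteq> {..<n}" for S
    using that degs finite_subset[OF that] by (auto simp: even_pos_degrees_def)
  have "\<forall>w\<in>Poly_Mapping.keys (fb d S). wdeg d w = edeg d S" if "S \<subseteq> {..<n}" for S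
    using admissible[OF that] by (simp add: fb_eq_antisymmetrization wdeg_keys_antisymmetrization)
  moreover have "bar d (fmap d x) = fmap d (dH x) \<and> deconc (fmap d x) = ftens d (coH d x)
      \<and> epsT (fmap d x) = epsH x \<and> fmap d (wedge x y) = shuffle d (fmap d x) (fmap d y)"
    if "Poly_Mapping.keys x \<subseteq> Pow {..<n}" "Poly_Mapping.keys y \<subseteq> Pow {..<n}" for x y :: "nat set \<Rightarrow>\<^sub>0 rat"
    using that admissible
    by (intro conjI bar_fmap deconc_fmap epsT_fmap fmap_wedge) (auto simp: subset_iff)
  moreover have "fmap d (Poly_Mapping.single {} 1) = Poly_Mapping.single [] 1"
    by (simp add: fmap_def fb_def)
  ultimately show ?thesis
    by blast
qed

end
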